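(* Let $\Gamma$ be a finite simplicial graph with no SIL, and let $k\ge0$ be the number of non-abelian free equivalence classes of $\Gamma$. Then $\mathbb{A}_\Gamma\cong(\mathbb{F}_2)^k\times\mathbb{A}_\Lambda$ for some graph $\Lambda$ with no non-abelian free equivalence class.
   Context: $\mathbb{A}_\Gamma$ is the right-angled Artin group on $\Gamma$. $\mathrm{lk}(u)$ = neighbours of $u$, $\mathrm{st}(u)=\mathrm{lk}(u)\cup\{u\}$; $u\le v$ iff $\mathrm{lk}(u)\subseteq\mathrm{st}(v)$; $u\sim v$ iff $u\le v\le u$; a non-abelian free equivalence class is a class of size $\ge 2$ whose vertices are pairwise non-adjacent. A SIL is a triple $(x,y\mid z)$ of pairwise non-adjacent vertices such that the component of $\Gamma\setminus(\mathrm{lk}(x)\cap\mathrm{lk}(y))$ containing $z$ contains neither $x$ nor $y$. *)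

theory Defs
  imports "HOL-Algebra.Algebra"
begin

definition simple_graph :: "'v set \<Rightarrow> ('v \<Rightarrow> 'v \<Rightarrow> bool) \<Rightarrow> bool" where
  "simple_graph V E \<longleftrightarrow> finite V \<and> (\<forall>u v. E u v \<longrightarrow> E v u) \<and> (\<forall>u. \<not> E u u)
     \<and> (\<forall>u v. E u v \<longrightarrow> u \<in> V \<and> v \<in> V)"

definition lk :: "'v set \<Rightarrow> ('v \<Rightarrow> 'v \<Rightarrow> bool) \<Rightarrow> 'v \<Rightarrow> 'v set" where
  "lk V E u = {w \<in> V. E u w}"

definition st :: "'v set \<Rightarrow> ('v \<Rightarrow> 'v \<Rightarrow> bool) \<Rightarrow> 'v \<Rightarrow> 'v set" where
  "st V E u = insert u (lk V E u)"

definition vle :: "'v set \<Rightarrow> ('v \<Rightarrow> 'v \<Rightarrow> bool) \<Rightarrow> 'v \<Rightarrow> 'v \<Rightarrow> bool" where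
  "vle V E u v \<longleftrightarrow> lk V E u \<subseteq> st V E v"

definition vequiv :: "'v set \<Rightarrow> ('v \<Rightarrow> 'v \<Rightarrow> bool) \<Rightarrow> 'v \<Rightarrow> 'v \<Rightarrow> bool" where
  "vequiv V E u v \<longleftrightarrow> vle V E u v \<and> vle V E v u"

definition equiv_class :: "'v set \<Rightarrow> ('v \<Rightarrow> 'v \<Rightarrow> bool) \<Rightarrow> 'v \<Rightarrow> 'v set" where
  "equiv_class V E u = {v \<in> V. vequiv V E u v}"

definition nafree_classes :: "'v set \<Rightarrow> ('v \<Rightarrow> 'v \<Rightarrow> bool) \<Rightarrow> 'v set set" where
  "nafree_classes V E = {C. \<exists>u\<in>V. C = equiv_class V E u \<and> 2 \<le> card C
      \<and> (\<forall>a\<in>C. \<forall>b\<in>C. \<not> E a b)}"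

definition component :: "('v \<Rightarrow> 'v \<Rightarrow> bool) \<Rightarrow> 'v set \<Rightarrow> 'v \<Rightarrow> 'v set" where
  "component E S z = {w. (\<lambda>a b. E a b \<and> a \<in> S \<and> b \<in> S)\<^sup>*\<^sup>* z w}"

definition is_SIL :: "'v set \<Rightarrow> ('v \<Rightarrow> 'v \<Rightarrow> bool) \<Rightarrow> 'v \<Rightarrow> 'v \<Rightarrow> 'v \<Rightarrow> bool" where
  "is_SIL V E x y z \<longleftrightarrow> x \<in> V \<and> y \<in> V \<and> z \<in> V \<and> x \<noteq> y \<and> x \<noteq> z \<and> y \<noteq> z
     \<and> \<not> E x y \<and> \<not> E x z \<and> \<not> E y z
     \<and> (let S = V - (lk V E x \<inter> lk V E y)
        in x \<notin> component E S z \<and> y \<notin> component E S z)"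

definition no_SIL :: "'v set \<Rightarrow> ('v \<Rightarrow> 'v \<Rightarrow> bool) \<Rightarrow> bool" where
  "no_SIL V E \<longleftrightarrow> (\<forall>x y z. \<not> is_SIL V E x y z)"

text \<open>Words are lists of letters (v, b): v^(+1) if b, v^(-1) otherwise.\<close>

inductive raag_step :: "'v set \<Rightarrow> ('v \<Rightarrow> 'v \<Rightarrow> bool) \<Rightarrow> ('v \<times> bool) list \<Rightarrow> ('v \<times> bool) list \<Rightarrow> bool"
  for V E where
  cancel: "a \<in> V \<Longrightarrow> raag_step V E (xs @ [(a, b), (a, \<not> b)] @ ys) (xs @ ys)"
| commute: "E a c \<Longrightarrow> raag_step V E (xs @ [(a, b), (c, d)] @ ys) (xs @ [(c, d), (a, b)] @ ys)"

definition raag_eq :: "'v set \<Rightarrow> ('v \<Rightarrow> 'v \<Rightarrow> bool) \<Rightarrow> ('v \<times> bool) list \<Rightarrow> ('v \<times> bool) list \<Rightarrow> bool" where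
  "raag_eq V E = (\<lambda>x y. raag_step V E x y \<or> raag_step V E y x)\<^sup>*\<^sup>*"

definition raag_class :: "'v set \<Rightarrow> ('v \<Rightarrow> 'v \<Rightarrow> bool) \<Rightarrow> ('v \<times> bool) list \<Rightarrow> ('v \<times> bool) list set" where
  "raag_class V E w = {w'. set (map fst w') \<subseteq> V \<and> raag_eq V E w w'}"

definition raag :: "'v set \<Rightarrow> ('v \<Rightarrow> 'v \<Rightarrow> bool) \<Rightarrow> ('v \<times> bool) list set monoid" where
  "raag V E = \<lparr> carrier = raag_class V E ` {w. set (map fst w) \<subseteq> V},
     monoid.mult = (\<lambda>A B. raag_class V E ((SOME a. a \<in> A) @ (SOME b. b \<in> B))),
     one = raag_class V E [] \<rparr>"

definition F2 :: "(bool \<times> bool) list set monoid" where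
  "F2 = raag UNIV (\<lambda>_ _. False)"

end

theory Submission
  imports Defs
begin

text \<open>
  If u and b are non-adjacent equivalent vertices, their links coincide; a vertex x outside
  lk u would then give the SIL (u, b | x), since deleting lk u = lk b leaves u and b
  isolated. So in a graph without SILs every non-abelian free class is a pair {u, b}
  adjacent to all other vertices: the graph is the join of the edgeless pair with the rest L,
  and A_\<Gamma> = F_2 \<times> A_L by sorting words into their {u, b}- and L-parts. The graph on L has
  no SIL and exactly the remaining k - 1 classes, so induction on k applies; at the end the
  vertices are relabelled by natural numbers.
\<close>

section \<open>Words\<close>

abbreviation word_on :: "'v set \<Rightarrow> ('v \<times> bool) list \<Rightarrow> bool" where
  "word_on V w \<equiv> fst ` set w \<subseteq> V"

abbreviation word_proj :: "'v set \<Rightarrow> ('v \<times> bool) list \<Rightarrow> ('v \<times> bool) list" where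
  "word_proj A \<equiv> filter (\<lambda>l. fst l \<in> A)"

abbreviation word_rename :: "('v \<Rightarrow> 'w) \<Rightarrow> ('v \<times> bool) list \<Rightarrow> ('w \<times> bool) list" where
  "word_rename f \<equiv> map (apfst f)"

definition induced :: "('v \<Rightarrow> 'v \<Rightarrow> bool) \<Rightarrow> 'v set \<Rightarrow> 'v \<Rightarrow> 'v \<Rightarrow> bool" where
  "induced E A = (\<lambda>c d. E c d \<and> c \<in> A \<and> d \<in> A)"

lemma raag_eq_symclp: "raag_eq V E = (symclp (raag_step V E))\<^sup>*\<^sup>*"
  by (simp add: raag_eq_def symclp_def[abs_def])

lemma raag_eq_refl [simp]: "raag_eq V E w w"
  by (simp add: raag_eq_def)

lemma raag_eq_sym: "raag_eq V E x y \<Longrightarrow> raag_eq V E y x"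
  unfolding raag_eq_symclp by (rule rtranclp_symclp_sym)

lemma raag_eq_trans [trans]: "raag_eq V E x y \<Longrightarrow> raag_eq V E y z \<Longrightarrow> raag_eq V E x z"
  unfolding raag_eq_def by (rule rtranclp_trans)

lemma raag_step_imp_eq: "raag_step V E x y \<Longrightarrow> raag_eq V E x y"
  unfolding raag_eq_symclp by (rule r_into_rtranclp) (rule symclpI1)

lemma raag_eq_map:
  assumes "\<And>x y. raag_step V E x y \<Longrightarrow> raag_eq V' E' (h x) (h y)"
  shows "raag_eq V E x y \<Longrightarrow> raag_eq V' E' (h x) (h y)"
  unfolding raag_eq_symclp[of V E]
proof (induction rule: rtranclp_induct)
  case (step y z)
  then have "raag_eq V' E' (h y) (h z)"
    by (auto elim: symclpE intro: assms raag_eq_sym)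
  with step.IH show ?case by (rule raag_eq_trans)
qed simp

lemma raag_step_append:
  "raag_step V E x y \<Longrightarrow> raag_step V E (xs @ x @ ys) (xs @ y @ ys)"
proof (induction rule: raag_step.induct)
  case (cancel a xs' b ys')
  then show ?case using raag_step.cancel[where xs = "xs @ xs'" and ys = "ys' @ ys"] by simp
next
  case (commute a c xs' b d ys')
  then show ?case using raag_step.commute[where xs = "xs @ xs'" and ys = "ys' @ ys"] by simp
qed

lemma raag_eq_append:
  assumes "raag_eq V E x x'" "raag_eq V E y y'"
  shows "raag_eq V E (x @ y) (x' @ y')"
proof -
  have "raag_eq V E ([] @ x @ y) ([] @ x' @ y)"
    by (rule raag_eq_map[where h = "\<lambda>w. [] @ w @ y", OF _ assms(1)])
      (rule raag_step_imp_eq, erule raag_step_append)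
  moreover have "raag_eq V E (x' @ y @ []) (x' @ y' @ [])"
    by (rule raag_eq_map[where h = "\<lambda>w. x' @ w @ []", OF _ assms(2)])
      (rule raag_step_imp_eq, erule raag_step_append)
  ultimately show ?thesis by (simp add: raag_eq_trans)
qed

lemma raag_step_word_rename:
  assumes "raag_step V E x y" "f ` V \<subseteq> V'" "\<And>a c. E a c \<Longrightarrow> E' (f a) (f c)"
  shows "raag_step V' E' (word_rename f x) (word_rename f y)"
  using assms(1)
proof (cases rule: raag_step.cases)
  case (cancel a xs b ys)
  then show ?thesis using raag_step.cancel[where a = "f a" and V = V' and E = E'] assms(2) by auto
next
  case (commute a c xs b d ys)
  then have "E' (f a) (f c)" by (intro assms(3))
  then show ?thesis
    using commute raag_step.commute[where xs = "word_rename f xs" and ys = "word_rename f ys"]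
    by simp
qed

lemma raag_eq_word_rename:
  assumes "raag_eq V E x y" "f ` V \<subseteq> V'" "\<And>a c. E a c \<Longrightarrow> E' (f a) (f c)"
  shows "raag_eq V' E' (word_rename f x) (word_rename f y)"
  by (rule raag_eq_map[where h = "word_rename f", OF _ assms(1)])
    (rule raag_step_imp_eq, erule raag_step_word_rename, use assms in auto)

lemma raag_eq_induced_mono:
  assumes "raag_eq A (induced E A) x y" "A \<subseteq> V"
  shows "raag_eq V E x y"
  using raag_eq_word_rename[OF assms(1), of id V E] assms(2) by (simp add: induced_def)

lemma raag_step_word_proj:
  assumes "raag_step V E x y"
  shows "raag_eq A (induced E A) (word_proj A x) (word_proj A y)"
  using assms
proof (cases rule: raag_step.cases)
  case (cancel a xs b ys)
  then show ?thesis
    using raag_step.cancel[where V = A and E = "induced E A" and xs = "word_proj A xs"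
        and ys = "word_proj A ys"]
    by (auto intro: raag_step_imp_eq)
next
  case (commute a c xs b d ys)
  then show ?thesis
    using raag_step.commute[where V = A and E = "induced E A" and xs = "word_proj A xs"
        and ys = "word_proj A ys"]
    by (auto intro: raag_step_imp_eq simp: induced_def)
qed

lemma raag_eq_word_proj:
  "raag_eq V E x y \<Longrightarrow> raag_eq A (induced E A) (word_proj A x) (word_proj A y)"
  by (rule raag_eq_map[OF raag_step_word_proj])

lemma raag_eq_move_right:
  assumes "\<And>c. c \<in> fst ` set w \<Longrightarrow> E a c"
  shows "raag_eq V E ((a, s) # w @ w') (w @ (a, s) # w')"
  using assms
proof (induction w)
  case (Cons l w)
  obtain c t where l: "l = (c, t)" by (cases l)
  have "raag_step V E ([] @ [(a, s), (c, t)] @ w @ w') ([] @ [(c, t), (a, s)] @ w @ w')"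
    using Cons.prems l by (intro raag_step.commute) simp
  then have "raag_eq V E ((a, s) # l # w @ w') ([l] @ ((a, s) # w @ w'))"
    using l by (simp add: raag_step_imp_eq)
  also have "raag_eq V E ([l] @ ((a, s) # w @ w')) ([l] @ (w @ (a, s) # w'))"
    using Cons by (intro raag_eq_append) simp_all
  finally show ?case by simp
qed simp

lemma raag_eq_sort:
  assumes "word_on (A \<union> B) w" "A \<inter> B = {}" "\<And>a c. a \<in> A \<Longrightarrow> c \<in> B \<Longrightarrow> E c a"
  shows "raag_eq V E w (word_proj A w @ word_proj B w)"
  using assms(1)
proof (induction w)
  case (Cons l w)
  obtain a s where l: "l = (a, s)" by (cases l)
  have IH: "raag_eq V E ([l] @ w) ([l] @ (word_proj A w @ word_proj B w))"
    using Cons by (intro raag_eq_append) auto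
  show ?case
  proof (cases "a \<in> A")
    case True
    with IH l assms(2) show ?thesis by auto
  next
    case False
    with Cons.prems l have "a \<in> B" by auto
    have "raag_eq V E ((a, s) # word_proj A w @ word_proj B w) (word_proj A w @ (a, s) # word_proj B w)"
      using \<open>a \<in> B\<close> by (intro raag_eq_move_right) (auto intro: assms(3))
    with IH l False \<open>a \<in> B\<close> show ?thesis by (auto intro: raag_eq_trans)
  qed
qed simp

lemma word_on_word_proj: "word_on A (word_proj A w)"
  by auto

lemma word_proj_id: "word_on A w \<Longrightarrow> word_proj A w = w"
  by (auto intro: filter_True)

lemma word_proj_disjoint: "word_on B w \<Longrightarrow> A \<inter> B = {} \<Longrightarrow> word_proj A w = []"
  by (auto intro: filter_False)

section \<open>Isomorphisms of right-angled Artin groups\<close>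

lemma carrier_raag: "carrier (raag V E) = raag_class V E ` {w. word_on V w}"
  by (simp add: raag_def)

lemma raag_class_eq: "raag_eq V E x y \<Longrightarrow> raag_class V E x = raag_class V E y"
  unfolding raag_class_def by (auto intro: raag_eq_trans raag_eq_sym)

lemma raag_class_self: "word_on V x \<Longrightarrow> x \<in> raag_class V E x"
  unfolding raag_class_def by simp

lemma raag_class_eqD:
  assumes "raag_class V E x = raag_class V E y" "word_on V y"
  shows "raag_eq V E x y"
proof -
  have "y \<in> raag_class V E x" using raag_class_self[OF assms(2)] assms(1) by simp
  then show ?thesis by (simp add: raag_class_def)
qed

lemma raag_class_memD: "w \<in> raag_class V E x \<Longrightarrow> word_on V w \<and> raag_eq V E x w"
  by (simp add: raag_class_def)

lemma raag_class_some:
  assumes "word_on V x"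
  shows "word_on V (SOME w. w \<in> raag_class V E x)" "raag_eq V E x (SOME w. w \<in> raag_class V E x)"
  using raag_class_memD[OF someI[of "\<lambda>w. w \<in> raag_class V E x", OF raag_class_self[OF assms]]]
  by simp_all

lemma raag_mult:
  assumes "word_on V x" "word_on V y"
  shows "raag_class V E x \<otimes>\<^bsub>raag V E\<^esub> raag_class V E y = raag_class V E (x @ y)"
proof -
  have "raag_eq V E (x @ y) ((SOME a. a \<in> raag_class V E x) @ (SOME b. b \<in> raag_class V E y))"
    using assms by (intro raag_eq_append raag_class_some)
  then show ?thesis by (simp add: raag_def raag_class_eq)
qed

lemma carrier_raagE:
  assumes "A \<in> carrier (raag V E)"
  obtains x where "word_on V x" "A = raag_class V E x"
  using assms by (auto simp: carrier_raag)

lemma raag_class_in_carrier: "word_on V x \<Longrightarrow> raag_class V E x \<in> carrier (raag V E)"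
  by (simp add: carrier_raag)

lemma raag_isoI:
  fixes F :: "('v \<times> bool) list \<Rightarrow> 'h"
  assumes resp: "\<And>x y. word_on V x \<Longrightarrow> word_on V y \<Longrightarrow> raag_eq V E x y \<Longrightarrow> F x = F y"
    and carr: "\<And>x. word_on V x \<Longrightarrow> F x \<in> carrier H"
    and mult: "\<And>x y. word_on V x \<Longrightarrow> word_on V y \<Longrightarrow> F (x @ y) = F x \<otimes>\<^bsub>H\<^esub> F y"
    and surj: "\<And>h. h \<in> carrier H \<Longrightarrow> \<exists>x. word_on V x \<and> F x = h"
    and inj: "\<And>x y. word_on V x \<Longrightarrow> word_on V y \<Longrightarrow> F x = F y \<Longrightarrow> raag_eq V E x y"
  shows "raag V E \<cong> H"
proof (rule is_isoI, rule isoI)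
  define \<phi> where "\<phi> A = F (SOME w. w \<in> A)" for A
  have \<phi>: "\<phi> (raag_class V E x) = F x" if "word_on V x" for x
    unfolding \<phi>_def using resp[OF that raag_class_some[OF that]] by simp
  have closed: "\<phi> A \<in> carrier H" if "A \<in> carrier (raag V E)" for A
    using that by (elim carrier_raagE) (simp add: \<phi> carr)
  show "\<phi> \<in> hom (raag V E) H"
  proof (rule homI)
    fix A B assume "A \<in> carrier (raag V E)" "B \<in> carrier (raag V E)"
    then obtain x y where "word_on V x" "word_on V y" "A = raag_class V E x" "B = raag_class V E y"
      by (elim carrier_raagE)
    moreover from this have "word_on V (x @ y)" by auto
    ultimately show "\<phi> (A \<otimes>\<^bsub>raag V E\<^esub> B) = \<phi> A \<otimes>\<^bsub>H\<^esub> \<phi> B"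
      by (simp add: raag_mult \<phi> mult)
  qed (rule closed)
  show "bij_betw \<phi> (carrier (raag V E)) (carrier H)"
  proof (rule bij_betw_imageI)
    show "inj_on \<phi> (carrier (raag V E))"
    proof (rule inj_onI)
      fix A B assume "A \<in> carrier (raag V E)" "B \<in> carrier (raag V E)" "\<phi> A = \<phi> B"
      then obtain x y where "word_on V x" "word_on V y" "\<phi> A = \<phi> B"
        and "A = raag_class V E x" "B = raag_class V E y"
        by (elim carrier_raagE)
      then show "A = B" by (simp add: \<phi> inj raag_class_eq)
    qed
    show "\<phi> ` carrier (raag V E) = carrier H"
    proof (intro equalityI subsetI)
      fix h assume "h \<in> carrier H"
      then obtain x where "word_on V x" "F x = h" using surj by blast
      then show "h \<in> \<phi> ` carrier (raag V E)"
        using raag_class_in_carrier[of x V E] \<phi> by (metis image_eqI)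
    qed (use closed in blast)
  qed
qed

lemma raag_join_iso:
  assumes disj: "A \<inter> B = {}" and join: "\<And>a c. a \<in> A \<Longrightarrow> c \<in> B \<Longrightarrow> E c a"
  shows "raag (A \<union> B) E \<cong> raag A (induced E A) \<times>\<times> raag B (induced E B)"
proof -
  define F where "F w = (raag_class A (induced E A) (word_proj A w),
      raag_class B (induced E B) (word_proj B w))" for w
  show ?thesis
  proof (rule raag_isoI[where F = F])
    fix x y assume "raag_eq (A \<union> B) E x y"
    then show "F x = F y" by (simp add: F_def raag_class_eq raag_eq_word_proj)
  next
    fix x show "F x \<in> carrier (raag A (induced E A) \<times>\<times> raag B (induced E B))"
      by (auto simp: F_def carrier_raag word_on_word_proj)
  next
    fix x y :: "('a \<times> bool) list"
    show "F (x @ y) = F x \<otimes>\<^bsub>raag A (induced E A) \<times>\<times> raag B (induced E B)\<^esub> F y"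
      by (simp add: F_def raag_mult[OF word_on_word_proj word_on_word_proj])
  next
    fix h assume "h \<in> carrier (raag A (induced E A) \<times>\<times> raag B (induced E B))"
    then obtain p q where h: "h = (raag_class A (induced E A) p, raag_class B (induced E B) q)"
      and "word_on A p" "word_on B q"
      by (auto simp: carrier_raag)
    moreover have "B \<inter> A = {}" using disj by blast
    ultimately have "word_proj A (p @ q) = p" "word_proj B (p @ q) = q"
      using disj by (simp_all add: word_proj_id word_proj_disjoint)
    then show "\<exists>x. word_on (A \<union> B) x \<and> F x = h"
      using \<open>word_on A p\<close> \<open>word_on B q\<close> by (intro exI[of _ "p @ q"]) (auto simp: F_def h)
  next
    fix x y assume x: "word_on (A \<union> B) x" and y: "word_on (A \<union> B) y" and "F x = F y"
    then have "raag_eq A (induced E A) (word_proj A x) (word_proj A y)"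
      "raag_eq B (induced E B) (word_proj B x) (word_proj B y)"
      by (auto simp: F_def intro: raag_class_eqD)
    then have "raag_eq (A \<union> B) E (word_proj A x @ word_proj B x) (word_proj A y @ word_proj B y)"
      by (intro raag_eq_append) (auto elim: raag_eq_induced_mono)
    then show "raag_eq (A \<union> B) E x y"
      using raag_eq_sort[OF x disj join] raag_eq_sort[OF y disj join]
      by (meson raag_eq_sym raag_eq_trans)
  qed
qed

definition image_edges :: "('v \<Rightarrow> 'w) \<Rightarrow> 'v set \<Rightarrow> ('v \<Rightarrow> 'v \<Rightarrow> bool) \<Rightarrow> 'w \<Rightarrow> 'w \<Rightarrow> bool" where
  "image_edges f V E = (\<lambda>c d. \<exists>x\<in>V. \<exists>y\<in>V. c = f x \<and> d = f y \<and> E x y)"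

lemma raag_rename_iso:
  assumes inj: "inj_on f V" and edges: "\<And>a c. E a c \<Longrightarrow> a \<in> V \<and> c \<in> V"
  shows "raag V E \<cong> raag (f ` V) (image_edges f V E)"
proof -
  define g where "g = inv_into V f"
  define F where "F w = raag_class (f ` V) (image_edges f V E) (word_rename f w)" for w
  have gf: "word_rename g (word_rename f w) = w" if "word_on V w" for w
    using that inj by (auto simp: g_def intro!: map_idI)
  have on_image: "word_on (f ` V) (word_rename f w)" if "word_on V w" for w
    using that by auto
  show ?thesis
  proof (rule raag_isoI[where F = F])
    fix x y assume "raag_eq V E x y"
    then have "raag_eq (f ` V) (image_edges f V E) (word_rename f x) (word_rename f y)"
      by (rule raag_eq_word_rename) (use edges in \<open>auto simp: image_edges_def\<close>)
    then show "F x = F y" by (simp add: F_def raag_class_eq)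
  next
    fix x assume "word_on V x"
    then show "F x \<in> carrier (raag (f ` V) (image_edges f V E))"
      unfolding F_def by (intro raag_class_in_carrier on_image)
  next
    fix x y assume "word_on V x" "word_on V y"
    then show "F (x @ y) = F x \<otimes>\<^bsub>raag (f ` V) (image_edges f V E)\<^esub> F y"
      by (simp add: F_def raag_mult[OF on_image on_image])
  next
    fix h assume "h \<in> carrier (raag (f ` V) (image_edges f V E))"
    then obtain q where h: "h = raag_class (f ` V) (image_edges f V E) q" and q: "word_on (f ` V) q"
      by (elim carrier_raagE)
    have "word_rename f (word_rename g q) = q"
      using q by (auto simp: g_def f_inv_into_f intro!: map_idI)
    moreover have "word_on V (word_rename g q)"
      using q by (auto simp: g_def inv_into_into)
    ultimately show "\<exists>x. word_on V x \<and> F x = h"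
      unfolding F_def h by (intro exI[of _ "word_rename g q"]) simp
  next
    fix x y assume x: "word_on V x" and y: "word_on V y" and "F x = F y"
    then have "raag_eq (f ` V) (image_edges f V E) (word_rename f x) (word_rename f y)"
      unfolding F_def by (intro raag_class_eqD on_image y)
    then have "raag_eq V E (word_rename g (word_rename f x)) (word_rename g (word_rename f y))"
      by (rule raag_eq_word_rename) (use inj in \<open>auto simp: g_def image_edges_def\<close>)
    then show "raag_eq V E x y" by (simp only: gf x y)
  qed
qed

lemma raag_edgeless_pair_iso_F2:
  assumes "u \<noteq> b"
  shows "raag {u, b} (\<lambda>_ _. False) \<cong> F2"
proof -
  have "inj_on (\<lambda>x. x = u) {u, b}" "(\<lambda>x. x = u) ` {u, b} = UNIV"
    using assms by (auto simp: inj_on_def)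
  moreover have "image_edges (\<lambda>x. x = u) {u, b} (\<lambda>_ _. False) = (\<lambda>_ _. False)"
    by (simp add: image_edges_def)
  ultimately show ?thesis
    using raag_rename_iso[of "\<lambda>x. x = u" "{u, b}" "\<lambda>_ _. False"] by (simp add: F2_def)
qed

text \<open>The library's DirProd_iso_trans needs group G, which is never established for raag here.\<close>
lemma DirProd_cong_iso:
  assumes "G \<cong> G'" "H \<cong> H'"
  shows "G \<times>\<times> H \<cong> G' \<times>\<times> H'"
proof -
  obtain g h where g: "g \<in> hom G G'" "bij_betw g (carrier G) (carrier G')"
    and h: "h \<in> hom H H'" "bij_betw h (carrier H) (carrier H')"
    using assms by (auto simp: is_iso_def iso_def)
  have "map_prod g h \<in> hom (G \<times>\<times> H) (G' \<times>\<times> H')"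
    using g(1) h(1) by (intro homI) (auto simp: hom_in_carrier hom_mult)
  moreover have "bij_betw (map_prod g h) (carrier (G \<times>\<times> H)) (carrier (G' \<times>\<times> H'))"
    using bij_betw_map_prod[OF g(2) h(2)] by simp
  ultimately show ?thesis by (intro is_isoI isoI)
qed

lemma DirProd_assoc_iso: "G \<times>\<times> (H \<times>\<times> I) \<cong> (G \<times>\<times> H) \<times>\<times> I"
  by (rule is_isoI[of "\<lambda>(x, y, z). ((x, y), z)"])
    (auto simp: iso_def hom_def bij_betw_def inj_on_def image_iff)

lemma DirProd_product_group_empty_iso: "R \<cong> product_group {} G \<times>\<times> R"
  by (rule is_isoI[of "\<lambda>r. (\<lambda>_. undefined, r)"])
    (auto simp: iso_def hom_def bij_betw_def inj_on_def)

lemma DirProd_product_group_insert_iso: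
  assumes "i \<notin> I"
  shows "G i \<times>\<times> product_group I G \<cong> product_group (insert i I) G"
proof (rule is_isoI, rule isoI)
  show "(\<lambda>(y, p). p(i := y)) \<in> hom (G i \<times>\<times> product_group I G) (product_group (insert i I) G)"
    using assms by (auto intro!: homI PiE_fun_upd simp: fun_eq_iff)
  show "bij_betw (\<lambda>(y, p). p(i := y)) (carrier (G i \<times>\<times> product_group I G))
      (carrier (product_group (insert i I) G))"
    using inj_combinator[OF assms] by (simp add: bij_betw_def PiE_insert_eq)
qed

lemma product_group_lessThan_Suc_iso:
  "G \<times>\<times> (product_group {..<n} (\<lambda>_. G) \<times>\<times> R) \<cong> product_group {..<Suc n} (\<lambda>_. G) \<times>\<times> R"
proof -
  have "G \<times>\<times> (product_group {..<n} (\<lambda>_. G) \<times>\<times> R) \<cong> (G \<times>\<times> product_group {..<n} (\<lambda>_. G)) \<times>\<times> R"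
    by (rule DirProd_assoc_iso)
  also have "\<dots> \<cong> product_group {..<Suc n} (\<lambda>_. G) \<times>\<times> R"
    using DirProd_product_group_insert_iso[of n "{..<n}" "\<lambda>_. G"]
    by (intro DirProd_cong_iso) (simp_all add: lessThan_Suc)
  finally show ?thesis .
qed

section \<open>Graphs without SILs\<close>

lemma simple_graph_sym: "simple_graph V E \<Longrightarrow> E x y \<Longrightarrow> E y x"
  unfolding simple_graph_def by blast

lemma simple_graph_irrefl: "simple_graph V E \<Longrightarrow> \<not> E x x"
  unfolding simple_graph_def by blast

lemma simple_graph_edge_in: "simple_graph V E \<Longrightarrow> E x y \<Longrightarrow> x \<in> V \<and> y \<in> V"
  unfolding simple_graph_def by blast

lemma simple_graph_induced: "simple_graph V E \<Longrightarrow> L \<subseteq> V \<Longrightarrow> simple_graph L (induced E L)"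
  unfolding simple_graph_def induced_def by (auto intro: finite_subset)

lemma induced_self: "simple_graph V E \<Longrightarrow> induced E V = E"
  by (auto simp: induced_def fun_eq_iff dest: simple_graph_edge_in)

lemma induced_induced: "L' \<subseteq> L \<Longrightarrow> induced (induced E L) L' = induced E L'"
  by (auto simp: induced_def fun_eq_iff)

lemma finite_nafree_classes: "simple_graph V E \<Longrightarrow> finite (nafree_classes V E)"
  by (rule finite_subset[of _ "Pow V"])
    (auto simp: nafree_classes_def equiv_class_def simple_graph_def)

lemma not_in_componentI:
  assumes "w \<noteq> z" "\<And>y. E y w \<Longrightarrow> y \<notin> S"
  shows "w \<notin> component E S z"
proof
  assume "w \<in> component E S z"
  then have "(\<lambda>a c. E a c \<and> a \<in> S \<and> c \<in> S)\<^sup>*\<^sup>* z w" by (simp add: component_def)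
  then show False using assms by (cases rule: rtranclp.cases) auto
qed

lemma lk_eq_if_vequiv:
  assumes "simple_graph V E" "vequiv V E u b" "\<not> E u b"
  shows "lk V E u = lk V E b"
  using assms simple_graph_sym[OF assms(1)] unfolding vequiv_def vle_def st_def lk_def by auto

text \<open>A vertex x missed by two non-adjacent twins u, b would give the SIL (u, b | x):
  removing their common link isolates u and b.\<close>
lemma no_SIL_twins_dominate:
  assumes sg: "simple_graph V E" and "no_SIL V E"
    and twins: "u \<in> V" "b \<in> V" "u \<noteq> b" "\<not> E u b" "lk V E u = lk V E b"
    and x: "x \<in> V" "x \<noteq> u" "x \<noteq> b"
  shows "E u x"
proof (rule ccontr)
  assume "\<not> E u x"
  with twins(5) x(1) have "\<not> E b x" by (auto simp: lk_def)
  let ?S = "V - (lk V E u \<inter> lk V E b)"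
  have "y \<notin> ?S" if "E y u \<or> E y b" for y
    using that twins(5) simple_graph_edge_in[OF sg] simple_graph_sym[OF sg] by (auto simp: lk_def)
  then have "u \<notin> component E ?S x" "b \<notin> component E ?S x"
    using x by (intro not_in_componentI; blast)+
  with twins x \<open>\<not> E u x\<close> \<open>\<not> E b x\<close> have "is_SIL V E u b x"
    by (auto simp: is_SIL_def Let_def)
  with \<open>no_SIL V E\<close> show False by (simp add: no_SIL_def)
qed

lemma nafree_class_no_SIL:
  assumes sg: "simple_graph V E" and "no_SIL V E" and "C \<in> nafree_classes V E"
  obtains u b where "u \<in> V" "b \<in> V" "u \<noteq> b" "\<not> E u b"
    "\<And>x. x \<in> V - {u, b} \<Longrightarrow> E u x \<and> E b x" "C = {u, b}"
proof -
  obtain u where u: "u \<in> V" "C = equiv_class V E u" "2 \<le> card C"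
    and indep: "\<forall>a\<in>C. \<forall>c\<in>C. \<not> E a c"
    using assms(3) unfolding nafree_classes_def by blast
  have "u \<in> C" using u(1,2) by (auto simp: equiv_class_def vequiv_def vle_def st_def)
  moreover have "C \<noteq> {u}" using u(3) by auto
  ultimately obtain b where "b \<in> C" "b \<noteq> u" by blast
  then have b: "b \<in> V" "vequiv V E u b" "\<not> E u b" using u(2) indep \<open>u \<in> C\<close>
    by (auto simp: equiv_class_def)
  have lk: "lk V E u = lk V E b" by (rule lk_eq_if_vequiv[OF sg b(2,3)])
  have dom: "E u x \<and> E b x" if "x \<in> V - {u, b}" for x
  proof -
    have "E u x" using that \<open>b \<noteq> u\<close> b lk u(1)
      by (intro no_SIL_twins_dominate[OF sg \<open>no_SIL V E\<close>]) auto
    with lk that show ?thesis by (auto simp: lk_def)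
  qed
  have "C \<subseteq> {u, b}"
    using dom indep \<open>u \<in> C\<close> u(2) by (auto simp: equiv_class_def)
  with \<open>u \<in> C\<close> \<open>b \<in> C\<close> have "C = {u, b}" by blast
  with u(1) b \<open>b \<noteq> u\<close> dom show ?thesis by (intro that) auto
qed

context
  fixes V :: "'v set" and E :: "'v \<Rightarrow> 'v \<Rightarrow> bool" and u b :: 'v and L :: "'v set"
  assumes sg: "simple_graph V E" and pair: "u \<in> V" "b \<in> V" "u \<noteq> b" "\<not> E u b"
    and L: "L = V - {u, b}" and dominate: "\<And>x. x \<in> L \<Longrightarrow> E u x \<and> E b x"
begin

lemma lk_pair: "x \<in> {u, b} \<Longrightarrow> lk V E x = L"
  using dominate simple_graph_edge_in[OF sg] simple_graph_irrefl[OF sg] simple_graph_sym[OF sg]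
    pair L
  by (auto simp: lk_def)

lemma lk_inner: "v \<in> L \<Longrightarrow> lk V E v = {u, b} \<union> lk L (induced E L) v"
  using dominate simple_graph_edge_in[OF sg] simple_graph_sym[OF sg] pair L
  by (auto simp: lk_def induced_def)

lemma vle_inner_iff: "v \<in> L \<Longrightarrow> w \<in> L \<Longrightarrow> vle V E v w \<longleftrightarrow> vle L (induced E L) v w"
  using lk_inner[of v] lk_inner[of w] L by (auto simp: vle_def st_def lk_def)

lemma not_vle_inner_pair: "v \<in> L \<Longrightarrow> w \<in> {u, b} \<Longrightarrow> \<not> vle V E v w"
  using lk_inner[of v] lk_pair[of w] L pair(3) by (auto simp: vle_def st_def)

lemma equiv_class_inner: "v \<in> L \<Longrightarrow> equiv_class V E v = equiv_class L (induced E L) v"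
  using vle_inner_iff not_vle_inner_pair L by (auto simp: equiv_class_def vequiv_def)

lemma equiv_class_pair: "x \<in> {u, b} \<Longrightarrow> equiv_class V E x = {u, b}"
  using not_vle_inner_pair pair L lk_pair
  by (auto simp: equiv_class_def vequiv_def vle_def st_def)

lemma pair_in_nafree_classes: "{u, b} \<in> nafree_classes V E"
  using equiv_class_pair[of u] pair simple_graph_irrefl[OF sg] simple_graph_sym[OF sg]
  unfolding nafree_classes_def by auto

lemma nafree_classes_pair_join:
  "nafree_classes V E = insert {u, b} (nafree_classes L (induced E L))"
proof (intro equalityI subsetI)
  fix C assume "C \<in> nafree_classes V E"
  then obtain v where v: "v \<in> V" "C = equiv_class V E v" "2 \<le> card C" "\<forall>a\<in>C. \<forall>c\<in>C. \<not> E a c"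
    unfolding nafree_classes_def by blast
  show "C \<in> insert {u, b} (nafree_classes L (induced E L))"
  proof (cases "v \<in> {u, b}")
    case True
    then show ?thesis using equiv_class_pair v(2) by simp
  next
    case False
    with v(1) L have "v \<in> L" by auto
    with v show ?thesis
      unfolding nafree_classes_def by (auto simp: equiv_class_inner induced_def)
  qed
next
  fix C assume "C \<in> insert {u, b} (nafree_classes L (induced E L))"
  then consider "C = {u, b}" | v where "v \<in> L" "C = equiv_class L (induced E L) v" "2 \<le> card C"
      "\<forall>a\<in>C. \<forall>c\<in>C. \<not> induced E L a c"
    unfolding nafree_classes_def by blast
  then show "C \<in> nafree_classes V E"
  proof cases
    case 1
    then show ?thesis using pair_in_nafree_classes by simp
  next
    case 2
    then have "C \<subseteq> L" by (auto simp: equiv_class_def)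
    with 2 L show ?thesis
      unfolding nafree_classes_def by (auto simp: equiv_class_inner induced_def intro!: bexI[of _ v])
  qed
qed

lemma pair_notin_nafree_classes_inner: "{u, b} \<notin> nafree_classes L (induced E L)"
  using L unfolding nafree_classes_def equiv_class_def by blast

text \<open>Since u and b lie in the link of every vertex of L, the set V - (lk x \<inter> lk y) is the
  same in both graphs for x, y \<in> L.\<close>
lemma no_SIL_inner:
  assumes "no_SIL V E"
  shows "no_SIL L (induced E L)"
  unfolding no_SIL_def
proof (intro allI notI)
  fix x y z assume sil: "is_SIL L (induced E L) x y z"
  define S where "S = L - (lk L (induced E L) x \<inter> lk L (induced E L) y)"
  have xyz: "x \<in> L" "y \<in> L" "z \<in> L" using sil by (auto simp: is_SIL_def)
  have "V - (lk V E x \<inter> lk V E y) = S"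
    using lk_inner[OF xyz(1)] lk_inner[OF xyz(2)] L by (auto simp: S_def lk_def)
  moreover have "component E S z = component (induced E L) S z"
    unfolding component_def S_def induced_def by (metis (no_types, lifting) DiffD1)
  ultimately have "is_SIL V E x y z"
    using sil xyz L by (auto simp: is_SIL_def Let_def S_def induced_def)
  with assms show False by (simp add: no_SIL_def)
qed

lemma raag_pair_join_iso: "raag V E \<cong> F2 \<times>\<times> raag L (induced E L)"
proof -
  have V: "V = {u, b} \<union> L" using pair L by auto
  have "induced E {u, b} = (\<lambda>_ _. False)"
    using pair(4) simple_graph_irrefl[OF sg] simple_graph_sym[OF sg]
    by (auto simp: induced_def fun_eq_iff)
  moreover have "raag ({u, b} \<union> L) E \<cong> raag {u, b} (induced E {u, b}) \<times>\<times> raag L (induced E L)"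
    using L dominate simple_graph_sym[OF sg] by (intro raag_join_iso) auto
  ultimately have "raag V E \<cong> raag {u, b} (\<lambda>_ _. False) \<times>\<times> raag L (induced E L)"
    using V by simp
  also have "\<dots> \<cong> F2 \<times>\<times> raag L (induced E L)"
    by (intro DirProd_cong_iso raag_edgeless_pair_iso_F2 iso_refl pair(3))
  finally show ?thesis .
qed

end

lemma raag_no_SIL_decomposition:
  assumes "simple_graph V E" "no_SIL V E" "card (nafree_classes V E) = n"
  shows "\<exists>L \<subseteq> V. nafree_classes L (induced E L) = {} \<and>
    raag V E \<cong> product_group {..<n} (\<lambda>_. F2) \<times>\<times> raag L (induced E L)"
  using assms
proof (induction n arbitrary: V E)
  case 0
  then have "nafree_classes V E = {}" using finite_nafree_classes[OF 0(1)] by simp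
  with 0 show ?case
    using DirProd_product_group_empty_iso induced_self by (metis lessThan_0 order_refl)
next
  case (Suc n)
  then obtain C where "C \<in> nafree_classes V E" by (metis card.empty ex_in_conv nat.distinct(1))
  then obtain u b where pair: "u \<in> V" "b \<in> V" "u \<noteq> b" "\<not> E u b"
    and dominate: "\<And>x. x \<in> V - {u, b} \<Longrightarrow> E u x \<and> E b x"
    using nafree_class_no_SIL[OF Suc.prems(1,2)] by blast
  define L0 where "L0 = V - {u, b}"
  note join = Suc.prems(1) pair L0_def dominate[folded L0_def]
  have "card (nafree_classes L0 (induced E L0)) = n"
    using Suc.prems(3) nafree_classes_pair_join[OF join] pair_notin_nafree_classes_inner[OF join]
      finite_nafree_classes[OF simple_graph_induced[OF Suc.prems(1)]] L0_def
    by auto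
  then obtain L where "L \<subseteq> L0" and L: "nafree_classes L (induced (induced E L0) L) = {}"
    and iso: "raag L0 (induced E L0) \<cong>
      product_group {..<n} (\<lambda>_. F2) \<times>\<times> raag L (induced (induced E L0) L)"
    using Suc.IH[OF simple_graph_induced[OF Suc.prems(1)] no_SIL_inner[OF join Suc.prems(2)]]
      L0_def by blast
  note induced_L = induced_induced[OF \<open>L \<subseteq> L0\<close>]
  have "raag V E \<cong> F2 \<times>\<times> raag L0 (induced E L0)"
    by (rule raag_pair_join_iso[OF join])
  also have "\<dots> \<cong> F2 \<times>\<times> (product_group {..<n} (\<lambda>_. F2) \<times>\<times> raag L (induced E L))"
    using iso unfolding induced_L by (intro DirProd_cong_iso iso_refl)
  also have "\<dots> \<cong> product_group {..<Suc n} (\<lambda>_. F2) \<times>\<times> raag L (induced E L)"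
    by (rule product_group_lessThan_Suc_iso)
  finally show ?case using \<open>L \<subseteq> L0\<close> L L0_def unfolding induced_L by auto
qed

lemma simple_graph_image_edges:
  assumes inj: "inj_on f V" and sg: "simple_graph V E"
  shows "simple_graph (f ` V) (image_edges f V E)"
proof -
  have "image_edges f V E d c \<and> c \<in> f ` V \<and> d \<in> f ` V" if "image_edges f V E c d" for c d
    using that simple_graph_sym[OF sg] by (auto simp: image_edges_def)
  moreover have "\<not> image_edges f V E c c" for c
    using inj simple_graph_irrefl[OF sg] by (auto simp: image_edges_def inj_on_def)
  moreover have "finite (f ` V)" using sg by (simp add: simple_graph_def)
  ultimately show ?thesis by (simp add: simple_graph_def)
qed

lemma inj_on_image_subset_iff:
  "inj_on f C \<Longrightarrow> A \<subseteq> C \<Longrightarrow> B \<subseteq> C \<Longrightarrow> f ` A \<subseteq> f ` B \<longleftrightarrow> A \<subseteq> B"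
  unfolding inj_on_def by blast

lemma equiv_class_image_edges:
  assumes inj: "inj_on f V" and sg: "simple_graph V E" and v: "v \<in> V"
  shows "equiv_class (f ` V) (image_edges f V E) (f v) = f ` equiv_class V E v"
proof -
  have edge: "image_edges f V E (f x) = (\<lambda>d. \<exists>y\<in>V. d = f y \<and> E x y)" if "x \<in> V" for x
    using that inj by (auto simp: image_edges_def inj_on_def fun_eq_iff)
  have lk: "lk (f ` V) (image_edges f V E) (f x) = f ` lk V E x" if "x \<in> V" for x
    using that simple_graph_edge_in[OF sg] by (auto simp: lk_def edge)
  have st: "st (f ` V) (image_edges f V E) (f x) = f ` st V E x" if "x \<in> V" for x
    using lk[OF that] by (simp add: st_def)
  have "lk V E x \<subseteq> V" "st V E x \<subseteq> V" if "x \<in> V" for x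
    using that by (auto simp: st_def lk_def)
  then have vle: "vle (f ` V) (image_edges f V E) (f x) (f y) \<longleftrightarrow> vle V E x y"
    if "x \<in> V" "y \<in> V" for x y
    using that by (simp add: vle_def lk st inj_on_image_subset_iff[OF inj])
  have "f w \<in> equiv_class (f ` V) (image_edges f V E) (f v) \<longleftrightarrow> w \<in> equiv_class V E v"
    if "w \<in> V" for w
    using that v by (simp add: equiv_class_def vequiv_def vle)
  then show ?thesis by (auto simp: equiv_class_def)
qed

lemma nafree_classes_image_edges_empty:
  assumes inj: "inj_on f V" and sg: "simple_graph V E" and empty: "nafree_classes V E = {}"
  shows "nafree_classes (f ` V) (image_edges f V E) = {}"
proof (rule ccontr)
  assume "nafree_classes (f ` V) (image_edges f V E) \<noteq> {}"
  then obtain v C where v: "v \<in> V" "C = f ` equiv_class V E v" "2 \<le> card C"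
    and indep: "\<forall>a\<in>C. \<forall>c\<in>C. \<not> image_edges f V E a c"
    unfolding nafree_classes_def by (auto simp: equiv_class_image_edges[OF inj sg])
  have sub: "equiv_class V E v \<subseteq> V" by (auto simp: equiv_class_def)
  then have "card C = card (equiv_class V E v)"
    using v(2) inj by (simp add: card_image inj_on_subset)
  moreover have "\<forall>a\<in>equiv_class V E v. \<forall>c\<in>equiv_class V E v. \<not> E a c"
    using indep v(2) sub by (simp add: image_edges_def) blast
  ultimately have "equiv_class V E v \<in> nafree_classes V E"
    using v unfolding nafree_classes_def by auto
  with empty show False by simp
qed

theorem lemma4p2:
  fixes V :: "'v set" and E :: "'v \<Rightarrow> 'v \<Rightarrow> bool"
  assumes "simple_graph V E"
    and "no_SIL V E"
    and "k = card (nafree_classes V E)"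
  shows "\<exists>(W :: nat set) (D :: nat \<Rightarrow> nat \<Rightarrow> bool).
           simple_graph W D \<and> nafree_classes W D = {} \<and>
           raag V E \<cong> (product_group {..<k} (\<lambda>_. F2) \<times>\<times> raag W D)"
proof -
  obtain L where "L \<subseteq> V" and L: "nafree_classes L (induced E L) = {}"
    and iso: "raag V E \<cong> product_group {..<k} (\<lambda>_. F2) \<times>\<times> raag L (induced E L)"
    using raag_no_SIL_decomposition[OF assms(1,2) assms(3)[symmetric]] by blast
  have sg: "simple_graph L (induced E L)"
    using simple_graph_induced[OF assms(1) \<open>L \<subseteq> V\<close>] .
  then obtain f :: "'v \<Rightarrow> nat" where inj: "inj_on f L"
    using finite_imp_inj_to_nat_seg by (metis simple_graph_def)
  have "raag L (induced E L) \<cong> raag (f ` L) (image_edges f L (induced E L))"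
    using inj by (rule raag_rename_iso) (simp add: induced_def)
  with iso have "raag V E \<cong> product_group {..<k} (\<lambda>_. F2) \<times>\<times>
      raag (f ` L) (image_edges f L (induced E L))"
    using DirProd_cong_iso[OF iso_refl] iso_trans by blast
  then show ?thesis
    using simple_graph_image_edges[OF inj sg] nafree_classes_image_edges_empty[OF inj sg L] by blast
qed

end
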